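(* Let $1\le t\le n$ and write $n=at+b$ with $a\ge1$ and $0\le b<t$. Then for all $s\ge1$, $$\mathrm{mult}\bigl(S/I_t(L_n)^s\bigr)=\binom{s+a-1}{s-1}\binom{a+t-b-1}{a}.$$ In particular, $\mathrm{mult}(S/I_t(L_n)^s)$ is a polynomial in $s$ of degree $a$ for all $s\ge1$.
   Context: $K$ is a field, $S=K[x_1,\ldots,x_n]$ standard graded, $I_t(L_n)=(u_1,\ldots,u_{n-t+1})$ with $u_i=x_ix_{i+1}\cdots x_{i+t-1}$ (the $t$-path ideal of the line graph $L_n$ with edges $\{x_j,x_{j+1}\}$). For a finitely generated graded $S$-module $M$ of Krull dimension $d$, its Hilbert series is $\sum_i\dim_K M_i z^i=Q(M,z)/(1-z)^d$ with $Q(M,z)$ a Laurent polynomial and $Q(M,1)\neq0$; the multiplicity is $\mathrm{mult}(M)=e_0(M)=Q(M,1)$. *)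

theory Defs
  imports "HOL-Computational_Algebra.Polynomial_FPS"
begin

(* Monomials of S = K[x_1,...,x_n] are represented by exponent vectors
   alpha :: nat => nat supported on {1..n}. *)

definition monomial_exps :: "nat \<Rightarrow> (nat \<Rightarrow> nat) set" where
  "monomial_exps n = {\<alpha>. \<forall>j. j \<notin> {1..n} \<longrightarrow> \<alpha> j = 0}"

definition mdeg :: "nat \<Rightarrow> (nat \<Rightarrow> nat) \<Rightarrow> nat" where
  "mdeg n \<alpha> = (\<Sum>j=1..n. \<alpha> j)"

(* exponent vector of the generator u_i = x_i x_{i+1} ... x_{i+t-1} *)
definition path_gen :: "nat \<Rightarrow> nat \<Rightarrow> nat \<Rightarrow> nat" where
  "path_gen t i = (\<lambda>j. if i \<le> j \<and> j < i + t then 1 else 0)"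

(* x^alpha lies in the monomial ideal I_t(L_n)^s iff it is divisible by a product of
   s generators u_i (i = 1..n-t+1), taken with multiplicities c i *)
definition in_path_power :: "nat \<Rightarrow> nat \<Rightarrow> nat \<Rightarrow> (nat \<Rightarrow> nat) \<Rightarrow> bool" where
  "in_path_power n t s \<alpha> \<longleftrightarrow>
     (\<exists>c :: nat \<Rightarrow> nat. (\<Sum>i=1..n-t+1. c i) = s \<and>
        (\<forall>j. (\<Sum>i=1..n-t+1. c i * path_gen t i j) \<le> \<alpha> j))"

(* Hilbert function of S / I_t(L_n)^s: the monomials not in a monomial ideal form a
   K-basis of the quotient, so dim_K (S/I^s)_k is the number of degree-k monomials
   outside I^s. *)
definition path_hilb :: "nat \<Rightarrow> nat \<Rightarrow> nat \<Rightarrow> nat \<Rightarrow> nat" where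
  "path_hilb n t s k = card {\<alpha> \<in> monomial_exps n. mdeg n \<alpha> = k \<and> \<not> in_path_power n t s \<alpha>}"

definition hilbert_mult :: "(nat \<Rightarrow> nat) \<Rightarrow> int" where
  "hilbert_mult h = (THE e. \<exists>(d::nat) (Q::int poly).
      fps_of_poly Q = Abs_fps (\<lambda>k. int (h k)) * (1 - fps_X) ^ d \<and>
      poly Q 1 \<noteq> 0 \<and> e = poly Q 1)"

end

theory Submission
  imports Defs
begin

text \<open>
  A monomial \<open>x\<^sup>\<alpha>\<close> lies outside \<open>I\<^sup>s\<close>, \<open>I = I\<^sub>t(L\<^sub>n)\<close>, exactly when some vertex cover \<open>C\<close> of the
  hypergraph of the supports \<open>{i..<i+t}\<close> of the generators carries exponent sum
  \<open>\<Sum>\<^sub>C \<alpha> < s\<close>; the nontrivial direction is a greedy packing of generators along the line.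
  By inclusion-exclusion over families \<open>F\<close> of covers, the Hilbert series of \<open>S/I\<^sup>s\<close> is
  an alternating sum of series counting the monomials with small sum on every member of
  \<open>F\<close>. Such a series only depends on the variables in \<open>U = \<Union>F\<close>, so after multiplication by
  \<open>(1-z)\<^bsup>n-a\<^esup>\<close>, where \<open>a = n div t\<close> is the least size of a cover, it becomes a polynomial times
  \<open>(1-z)\<^bsup>|U|-a\<^esup>\<close>. At \<open>z = 1\<close> only the families consisting of one minimum cover survive, each
  contributing the number \<open>(s+a-1 choose s-1)\<close> of monomials of degree below \<open>s\<close> in \<open>a\<close>
  variables, and the minimum covers, counted through their largest element, number
  \<open>(a+t-b-1 choose a)\<close>.
\<close>

unbundle fps_syntax

section \<open>Counting exponent vectors by degree\<close>

definition exps_on :: "'a set \<Rightarrow> ('a \<Rightarrow> nat) set" where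
  "exps_on X = {\<alpha>. \<forall>j. j \<notin> X \<longrightarrow> \<alpha> j = 0}"

definition deg_count :: "(('a \<Rightarrow> nat) \<Rightarrow> bool) \<Rightarrow> 'a set \<Rightarrow> nat \<Rightarrow> nat" where
  "deg_count P X k = card {\<alpha> \<in> exps_on X. P \<alpha> \<and> sum \<alpha> X = k}"

definition deg_series :: "(('a \<Rightarrow> nat) \<Rightarrow> bool) \<Rightarrow> 'a set \<Rightarrow> int fps" where
  "deg_series P X = Abs_fps (\<lambda>k. int (deg_count P X k))"

lemma finite_exps_on_deg:
  assumes "finite X"
  shows "finite {\<alpha> \<in> exps_on X. P \<alpha> \<and> sum \<alpha> X = k}"
proof (rule finite_subset)
  show "{\<alpha> \<in> exps_on X. P \<alpha> \<and> sum \<alpha> X = k}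
      \<subseteq> {f. \<forall>x. (x \<in> X \<longrightarrow> f x \<in> {0..k}) \<and> (x \<notin> X \<longrightarrow> f x = 0)}"
    using assms by (auto simp: exps_on_def intro: member_le_sum)
  show "finite {f. \<forall>x. (x \<in> X \<longrightarrow> f x \<in> {0..k}) \<and> (x \<notin> X \<longrightarrow> f x = (0::nat))}"
    by (rule finite_set_of_finite_funs) (use assms in auto)
qed

lemma sum_fun_upd_remove:
  assumes "finite X" "v \<in> X"
  shows "sum (\<alpha>(v := m)) X = m + sum \<alpha> (X - {v})"
  using assms by (simp add: sum.remove)

lemma deg_count_0_remove:
  assumes "finite X" "v \<in> X"
  shows "deg_count P X 0 = deg_count P (X - {v}) 0"
proof -
  have "{\<alpha> \<in> exps_on X. P \<alpha> \<and> sum \<alpha> X = 0} = {\<alpha> \<in> exps_on (X - {v}). P \<alpha> \<and> sum \<alpha> (X - {v}) = 0}"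
    using assms by (auto simp: exps_on_def sum.remove)
  then show ?thesis by (simp add: deg_count_def)
qed

lemma exps_on_deg_Suc_eq:
  assumes "finite X" "v \<in> X" and indep: "\<And>\<alpha> m. P (\<alpha>(v := m)) = P \<alpha>"
  shows "{\<alpha> \<in> exps_on X. P \<alpha> \<and> sum \<alpha> X = Suc k}
       = {\<alpha> \<in> exps_on (X - {v}). P \<alpha> \<and> sum \<alpha> (X - {v}) = Suc k}
         \<union> (\<lambda>\<alpha>. \<alpha>(v := Suc (\<alpha> v))) ` {\<alpha> \<in> exps_on X. P \<alpha> \<and> sum \<alpha> X = k}"
    (is "?S = ?Z \<union> ?f ` ?T")
proof (intro equalityI subsetI)
  fix \<alpha> assume \<alpha>: "\<alpha> \<in> ?S"
  show "\<alpha> \<in> ?Z \<union> ?f ` ?T"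
  proof (cases "\<alpha> v = 0")
    case True
    then show ?thesis using \<alpha> assms by (auto simp: exps_on_def sum.remove)
  next
    case False
    define \<beta> where "\<beta> = \<alpha>(v := \<alpha> v - 1)"
    have "sum \<beta> X = \<alpha> v - 1 + sum \<alpha> (X - {v})"
      unfolding \<beta>_def by (rule sum_fun_upd_remove[OF assms(1,2)])
    then have "\<beta> \<in> ?T"
      using \<alpha> False assms indep[of \<alpha> "\<alpha> v - 1"]
      by (auto simp: \<beta>_def exps_on_def sum.remove[of X v \<alpha>])
    moreover have "\<alpha> = ?f \<beta>" using False by (auto simp: \<beta>_def)
    ultimately show ?thesis by blast
  qed
next
  fix \<alpha> assume "\<alpha> \<in> ?Z \<union> ?f ` ?T"
  then show "\<alpha> \<in> ?S"
  proof
    assume "\<alpha> \<in> ?Z"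
    then show ?thesis using assms by (auto simp: exps_on_def sum.remove)
  next
    assume "\<alpha> \<in> ?f ` ?T"
    then obtain \<beta> where \<beta>: "\<beta> \<in> ?T" and \<alpha>: "\<alpha> = ?f \<beta>" by blast
    have "sum \<alpha> X = Suc (\<beta> v) + sum \<beta> (X - {v})"
      unfolding \<alpha> by (rule sum_fun_upd_remove[OF assms(1,2)])
    then show ?thesis
      using \<alpha> \<beta> assms indep[of \<beta> "Suc (\<beta> v)"]
      by (auto simp: exps_on_def sum.remove[of X v \<beta>])
  qed
qed

lemma deg_count_Suc_remove:
  assumes "finite X" "v \<in> X" and "\<And>\<alpha> m. P (\<alpha>(v := m)) = P \<alpha>"
  shows "deg_count P X (Suc k) = deg_count P (X - {v}) (Suc k) + deg_count P X k"
proof -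
  let ?Z = "{\<alpha> \<in> exps_on (X - {v}). P \<alpha> \<and> sum \<alpha> (X - {v}) = Suc k}"
  let ?T = "{\<alpha> \<in> exps_on X. P \<alpha> \<and> sum \<alpha> X = k}"
  let ?f = "\<lambda>\<alpha>. \<alpha>(v := Suc (\<alpha> v))"
  have "inj_on ?f ?T"
    by (rule inj_onI) (metis fun_upd_idem_iff fun_upd_upd nat.inject fun_upd_same)
  moreover have "?Z \<inter> ?f ` ?T = {}" by (auto simp: exps_on_def)
  moreover have "finite ?Z" "finite ?T" using assms by (auto intro: finite_exps_on_deg)
  ultimately show ?thesis
    by (simp add: deg_count_def exps_on_deg_Suc_eq[OF assms] card_Un_disjoint card_image)
qed

lemma fps_times_one_minus_X_nth:
  "((f :: int fps) * (1 - fps_X)) $ n = f $ n - (if n = 0 then 0 else f $ (n - 1))"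
proof -
  have "f * (1 - fps_X) = f - fps_X * f" by (simp add: algebra_simps)
  then show ?thesis by (cases n) auto
qed

lemma deg_series_times_one_minus_X:
  assumes "finite X" "v \<in> X" and "\<And>\<alpha> m. P (\<alpha>(v := m)) = P \<alpha>"
  shows "deg_series P X * (1 - fps_X) = deg_series P (X - {v})"
proof (rule fps_ext)
  fix k
  show "(deg_series P X * (1 - fps_X)) $ k = deg_series P (X - {v}) $ k"
    unfolding fps_times_one_minus_X_nth
    by (cases k) (auto simp: deg_series_def deg_count_0_remove[OF assms(1,2)]
        deg_count_Suc_remove[OF assms])
qed

lemma deg_series_remove_vars:
  assumes "finite D" "D \<inter> U = {}" and "finite U"
    and indep: "\<And>\<alpha> \<beta>. (\<forall>j\<in>U. \<alpha> j = \<beta> j) \<Longrightarrow> P \<alpha> = P \<beta>"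
  shows "deg_series P (U \<union> D) * (1 - fps_X) ^ card D = deg_series P U"
  using assms(1,2)
proof (induction D rule: finite_induct)
  case empty
  then show ?case by simp
next
  case (insert v D)
  have "deg_series P (U \<union> insert v D) * (1 - fps_X) = deg_series P (U \<union> insert v D - {v})"
    using insert assms(3) by (intro deg_series_times_one_minus_X indep) auto
  also have "U \<union> insert v D - {v} = U \<union> D" using insert by auto
  finally show ?case
    using insert by (simp add: mult.assoc flip: mult.assoc[of _ "1 - fps_X"])
qed

lemma deg_count_all:
  assumes "finite X"
  shows "deg_count (\<lambda>_. True) X k
           = (if X = {} then (if k = 0 then 1 else 0) else (k + card X - 1) choose k)"
  using assms
proof (induction X arbitrary: k rule: finite_induct)
  case empty
  have exps_empty: "exps_on {} = {\<lambda>_. 0}"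
    by (auto simp: exps_on_def)
  show ?case by (simp add: deg_count_def exps_empty)
next
  case (insert v X)
  have fin: "finite (insert v X)" and rem: "insert v X - {v} = X" using insert by auto
  show ?case
  proof (induction k)
    case 0
    then show ?case using deg_count_0_remove[OF fin, of v] insert rem by auto
  next
    case (Suc k)
    then show ?case
      using deg_count_Suc_remove[OF fin, of v "\<lambda>_. True" k] insert.IH[of "Suc k"] insert rem
      by (cases "X = {}") (auto simp: add.commute)
  qed
qed

section \<open>Vertex covers of the path hypergraph\<close>

definition hits_windows :: "nat \<Rightarrow> nat set \<Rightarrow> nat set \<Rightarrow> bool" where
  "hits_windows t I C \<longleftrightarrow> (\<forall>i\<in>I. \<exists>j\<in>C. i \<le> j \<and> j < i + t)"

definition path_cover :: "nat \<Rightarrow> nat \<Rightarrow> nat set \<Rightarrow> bool" where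
  "path_cover t m C \<longleftrightarrow> C \<subseteq> {1..m} \<and> hits_windows t {1..m + 1 - t} C"

text \<open>No cover is smaller than \<open>m div t\<close>, see \<open>card_path_cover_ge\<close>.\<close>

definition min_path_covers :: "nat \<Rightarrow> nat \<Rightarrow> nat set set" where
  "min_path_covers t m = {C. path_cover t m C \<and> card C = m div t}"

lemma path_cover_subset: "path_cover t m C \<Longrightarrow> C \<subseteq> {1..m}"
  by (simp add: path_cover_def)

lemma finite_path_cover: "path_cover t m C \<Longrightarrow> finite C"
  by (rule finite_subset[OF path_cover_subset]) simp_all

lemma finite_path_covers: "finite {C. path_cover t m C}"
proof (rule finite_subset)
  show "{C. path_cover t m C} \<subseteq> Pow {1..m}" using path_cover_subset by blast
qed simp

lemma path_cover_Union:
  assumes "F \<subseteq> {C. path_cover t m C}" "F \<noteq> {}"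
  shows "path_cover t m (\<Union>F)"
  using assms by (fastforce simp: path_cover_def hits_windows_def)

lemma path_cover_last_window:
  assumes "path_cover t m C" "1 \<le> t" "t \<le> m"
  shows "C \<noteq> {}" and "m + 1 \<le> Max C + t"
proof -
  have "m + 1 - t \<in> {1..m + 1 - t}" using assms(3) by simp
  then obtain j where j: "j \<in> C" "m + 1 - t \<le> j"
    using assms(1) unfolding path_cover_def hits_windows_def by blast
  then show "C \<noteq> {}" by blast
  have "j \<le> Max C" using j finite_path_cover[OF assms(1)] by simp
  then show "m + 1 \<le> Max C + t" using j assms(3) by linarith
qed

lemma path_cover_remove_Max:
  assumes C: "path_cover t m C" and "C \<noteq> {}"
  shows "path_cover t (Max C - 1) (C - {Max C})"
proof -
  have fin: "finite C" using finite_path_cover[OF C] .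
  have Max_le: "x \<le> Max C" if "x \<in> C" for x using fin that by simp
  have Max_in: "Max C \<in> {1..m}" using path_cover_subset[OF C] Max_in[OF fin assms(2)] by blast
  have "C - {Max C} \<subseteq> {1..Max C - 1}"
    using path_cover_subset[OF C] Max_le by fastforce
  moreover have "\<exists>j\<in>C - {Max C}. i \<le> j \<and> j < i + t" if "i \<in> {1..Max C - 1 + 1 - t}" for i
  proof -
    have "i \<in> {1..m + 1 - t}" using that Max_in by auto
    then obtain j where "j \<in> C" "i \<le> j" "j < i + t"
      using C unfolding path_cover_def hits_windows_def by blast
    moreover have "i + t \<le> Max C" using that Max_in by auto
    ultimately show ?thesis by auto
  qed
  ultimately show ?thesis by (simp add: path_cover_def hits_windows_def)
qed

lemma card_path_cover_ge: "1 \<le> t \<Longrightarrow> path_cover t m C \<Longrightarrow> m div t \<le> card C"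
proof (induction m arbitrary: C rule: less_induct)
  case (less m)
  show ?case
  proof (cases "m < t")
    case False
    then have tm: "t \<le> m" by simp
    let ?c = "Max C"
    have ne: "C \<noteq> {}" and last: "m + 1 \<le> ?c + t"
      using path_cover_last_window[OF less.prems(2,1) tm] by auto
    have fin: "finite C" using finite_path_cover[OF less.prems(2)] .
    have "?c \<in> {1..m}" using path_cover_subset[OF less.prems(2)] Max_in[OF fin ne] by blast
    then have "?c - 1 < m" by auto
    then have "(?c - 1) div t \<le> card (C - {?c})"
      using less.IH less.prems(1) path_cover_remove_Max[OF less.prems(2) ne] by blast
    moreover have "card C = card (C - {?c}) + 1" using fin ne by (simp add: card_gt_0_iff)
    moreover have "(m - t) div t \<le> (?c - 1) div t" using last by (intro div_le_mono) linarith
    moreover have "(m - t) div t = m div t - 1" using tm less.prems(1) by (simp add: le_div_geq)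
    ultimately show ?thesis by linarith
  qed simp
qed

lemma min_path_covers_below: "m < t \<Longrightarrow> min_path_covers t m = {{}}"
  by (auto simp: min_path_covers_def path_cover_def hits_windows_def dest: finite_subset)

lemma pred_div_in_last_window:
  fixes t m c :: nat
  assumes "1 \<le> t" "t \<le> m" "c \<in> {m + 1 - t..(m div t) * t}"
  shows "(c - 1) div t = m div t - 1"
proof -
  define a where "a = m div t"
  have "t * a \<le> m" by (simp add: a_def mult.commute)
  moreover have "1 \<le> a" using assms(1,2) div_le_mono[of t m t] by (simp add: a_def)
  moreover have "m + 1 - t \<le> c" "c \<le> t * a" using assms(3) by (auto simp: a_def mult.commute)
  ultimately have "t * (a - 1) \<le> c - 1" "c - 1 < t * Suc (a - 1)"
    using assms(2) by (simp_all add: diff_mult_distrib2)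
  then show ?thesis unfolding a_def by (rule div_nat_eqI)
qed

lemma pred_mod_in_last_window:
  fixes t m c :: nat
  assumes "1 \<le> t" "t \<le> m" and c: "c \<in> {m + 1 - t..(m div t) * t}"
  shows "t - (c - 1) mod t - 1 = (m div t) * t - c"
proof -
  define a where "a = m div t"
  have div: "(c - 1) div t = a - 1" using pred_div_in_last_window[OF assms] by (simp add: a_def)
  have "t * a \<le> m" by (simp add: a_def mult.commute)
  moreover have "1 \<le> a" using assms(1,2) div_le_mono[of t m t] by (simp add: a_def)
  moreover have "m + 1 - t \<le> c" "c \<le> a * t" using c by (auto simp: a_def)
  moreover have "(c - 1) mod t = c - 1 - (a * t - t)"
    using div minus_div_mult_eq_mod[of "c - 1" t] by (simp add: diff_mult_distrib)
  ultimately show ?thesis unfolding a_def[symmetric] by (simp add: mult.commute)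
qed

lemma min_path_cover_Max:
  assumes "1 \<le> t" "t \<le> m" and C: "C \<in> min_path_covers t m"
  shows "Max C \<in> {m + 1 - t..(m div t) * t}"
    and "C - {Max C} \<in> min_path_covers t (Max C - 1)"
proof -
  let ?c = "Max C" and ?a = "m div t"
  have cov: "path_cover t m C" and card: "card C = ?a" using C by (auto simp: min_path_covers_def)
  have ne: "C \<noteq> {}" and last: "m + 1 \<le> ?c + t"
    using path_cover_last_window[OF cov assms(1,2)] by auto
  have fin: "finite C" using finite_path_cover[OF cov] .
  have card': "card (C - {?c}) = ?a - 1" using fin ne card by simp
  have cov': "path_cover t (?c - 1) (C - {?c})" by (rule path_cover_remove_Max[OF cov ne])
  have "1 \<le> ?a" using assms(1,2) div_le_mono[of t m t] by simp
  moreover have "(?c - 1) div t \<le> ?a - 1" using card_path_cover_ge[OF assms(1) cov'] card' by simp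
  ultimately have "?c - 1 < ?a * t"
    using assms(1) by (simp add: div_less_iff_less_mult[symmetric])
  then show window: "?c \<in> {m + 1 - t..?a * t}" using last by auto
  show "C - {?c} \<in> min_path_covers t (?c - 1)"
    using cov' card' pred_div_in_last_window[OF assms(1,2) window]
    by (simp add: min_path_covers_def)
qed

lemma min_path_cover_insert:
  assumes "1 \<le> t" "t \<le> m" and c: "c \<in> {m + 1 - t..(m div t) * t}"
    and C: "C \<in> min_path_covers t (c - 1)"
  shows "insert c C \<in> min_path_covers t m"
proof -
  have cov: "path_cover t (c - 1) C" and card: "card C = (c - 1) div t"
    using C by (auto simp: min_path_covers_def)
  have "m div t * t \<le> m" by (rule div_times_less_eq_dividend)
  moreover have "m + 1 - t \<le> c" "c \<le> m div t * t" using c by auto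
  ultimately have "1 \<le> c" "c \<le> m" using assms(2) by linarith+
  then have c_in: "c \<in> {1..m}" by simp
  have sub: "C \<subseteq> {1..c - 1}" by (rule path_cover_subset[OF cov])
  then have "c \<notin> C" by fastforce
  then have "card (insert c C) = m div t"
    using card pred_div_in_last_window[OF assms(1,2) c] finite_path_cover[OF cov]
      assms(1,2) div_le_mono[of t m t] by simp
  moreover have "\<exists>j\<in>insert c C. i \<le> j \<and> j < i + t" if i: "i \<in> {1..m + 1 - t}" for i
  proof (cases "i + t \<le> c")
    case True
    then have "i \<in> {1..c - 1 + 1 - t}" using i by auto
    then show ?thesis using cov unfolding path_cover_def hits_windows_def by blast
  next
    case False
    then show ?thesis using i c by auto
  qed
  moreover have "{1..c - 1} \<subseteq> {1..m}" using c_in by auto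
  then have "insert c C \<subseteq> {1..m}" using sub c_in by blast
  ultimately show ?thesis by (simp add: min_path_covers_def path_cover_def hits_windows_def)
qed

lemma min_path_covers_decomp:
  assumes "1 \<le> t" "t \<le> m"
  shows "min_path_covers t m
           = (\<Union>c\<in>{m + 1 - t..(m div t) * t}. insert c ` min_path_covers t (c - 1))"
proof (intro equalityI subsetI)
  fix C assume C: "C \<in> min_path_covers t m"
  have "finite C" "C \<noteq> {}"
    using C path_cover_last_window[OF _ assms] finite_path_cover
    by (auto simp: min_path_covers_def)
  then have "C = insert (Max C) (C - {Max C})" using Max_in by blast
  then show "C \<in> (\<Union>c\<in>{m + 1 - t..(m div t) * t}. insert c ` min_path_covers t (c - 1))"
    using min_path_cover_Max[OF assms C] by blast
qed (use min_path_cover_insert[OF assms] in blast)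

lemma finite_min_path_covers: "finite (min_path_covers t m)"
  by (rule finite_subset[OF _ finite_path_covers[of t m]]) (auto simp: min_path_covers_def)

lemma card_min_path_covers_rec:
  assumes "1 \<le> t" "t \<le> m"
  shows "card (min_path_covers t m)
           = (\<Sum>c\<in>{m + 1 - t..(m div t) * t}. card (min_path_covers t (c - 1)))"
proof -
  have below: "x < c" if "C \<in> min_path_covers t (c - 1)" "x \<in> C" for C c x
  proof -
    have "x \<in> {1..c - 1}"
      using that path_cover_subset[of t "c - 1" C] by (auto simp: min_path_covers_def)
    then show ?thesis by auto
  qed
  have inj: "inj_on (insert c) (min_path_covers t (c - 1))" for c
  proof (rule inj_onI)
    fix X Y assume X: "X \<in> min_path_covers t (c - 1)" and Y: "Y \<in> min_path_covers t (c - 1)"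
      and eq: "insert c X = insert c Y"
    have "c \<notin> X" "c \<notin> Y" using below[OF X, of c] below[OF Y, of c] by auto
    then show "X = Y" using eq by (simp add: insert_ident)
  qed
  have disj: "insert c ` min_path_covers t (c - 1) \<inter> insert c' ` min_path_covers t (c' - 1) = {}"
    if "c \<noteq> c'" for c c'
  proof -
    have False if "X \<in> min_path_covers t (c - 1)" "Y \<in> min_path_covers t (c' - 1)"
      "insert c X = insert c' Y" for X Y
    proof -
      have "c \<in> insert c' Y" by (simp flip: that(3))
      moreover have "c' \<in> insert c X" by (simp add: that(3))
      ultimately have "c \<in> Y" "c' \<in> X" using \<open>c \<noteq> c'\<close> by simp_all
      then show False using below[OF that(1), of c'] below[OF that(2), of c] by simp
    qed
    then show ?thesis by blast
  qed
  have "card (min_path_covers t m)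
      = (\<Sum>c\<in>{m + 1 - t..(m div t) * t}. card (insert c ` min_path_covers t (c - 1)))"
    unfolding min_path_covers_decomp[OF assms]
  proof (rule card_UN_disjoint)
    show "\<forall>c\<in>{m + 1 - t..m div t * t}. finite (insert c ` min_path_covers t (c - 1))"
      using finite_min_path_covers by blast
  qed (use disj in simp_all)
  also have "\<dots> = (\<Sum>c\<in>{m + 1 - t..(m div t) * t}. card (min_path_covers t (c - 1)))"
    using inj by (simp add: card_image)
  finally show ?thesis .
qed

lemma sum_reversed_choose:
  fixes q r N :: nat
  assumes "r \<le> N"
  shows "(\<Sum>c=N - r..N. (q + (N - c)) choose q) = Suc (q + r) choose Suc q"
proof -
  have "(\<Sum>c=N - r..N. (q + (N - c)) choose q) = (\<Sum>y\<le>r. (q + y) choose y)"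
  proof (rule sum.reindex_bij_witness[where i = "\<lambda>y. N - y" and j = "\<lambda>c. N - c"])
    fix c
    show "(q + (N - c)) choose (N - c) = (q + (N - c)) choose q"
      using binomial_symmetric[of q "q + (N - c)"] by simp
  qed (use assms in auto)
  also have "\<dots> = Suc (q + r) choose r" by (rule sum_choose_lower)
  also have "\<dots> = Suc (q + r) choose Suc q"
    using binomial_symmetric[of r "Suc (q + r)"] by simp
  finally show ?thesis .
qed

lemma card_min_path_covers:
  assumes "1 \<le> t"
  shows "card (min_path_covers t m) = (m div t + t - m mod t - 1) choose (m div t)"
proof (induction m rule: less_induct)
  case (less m)
  show ?case
  proof (cases "m < t")
    case True
    then show ?thesis by (simp add: min_path_covers_below)
  next
    case False
    define a b where "a = m div t" and "b = m mod t"
    have tm: "t \<le> m" using False by simp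
    have a: "1 \<le> a" using assms tm div_le_mono[of t m t] by (simp add: a_def)
    have b: "b < t" using assms by (simp add: b_def)
    have m: "m = a * t + b" by (simp add: a_def b_def)
    have "t \<le> a * t" using a by simp
    then have window: "{m + 1 - t..a * t} = {a * t - (t - 1 - b)..a * t}" using m b by auto
    have "card (min_path_covers t (c - 1)) = (a - 1 + (a * t - c)) choose (a - 1)"
      if c: "c \<in> {m + 1 - t..a * t}" for c
    proof -
      have "c \<le> a * t" using c by simp
      then have "c - 1 < m" using m assms \<open>t \<le> a * t\<close> by linarith
      then have "card (min_path_covers t (c - 1))
          = ((c - 1) div t + t - (c - 1) mod t - 1) choose ((c - 1) div t)"
        by (rule less.IH)
      moreover have "(c - 1) div t + t - (c - 1) mod t - 1 = a - 1 + (a * t - c)"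
        using pred_div_in_last_window[OF assms tm c[unfolded a_def]]
          pred_mod_in_last_window[OF assms tm c[unfolded a_def]] mod_less_divisor[of t "c - 1"] assms
        unfolding a_def by linarith
      ultimately show ?thesis
        using pred_div_in_last_window[OF assms tm c[unfolded a_def]] by (simp add: a_def)
    qed
    then have "card (min_path_covers t m)
        = (\<Sum>c\<in>{m + 1 - t..a * t}. (a - 1 + (a * t - c)) choose (a - 1))"
      using card_min_path_covers_rec[OF assms tm] by (simp add: a_def)
    also have "\<dots> = Suc (a - 1 + (t - 1 - b)) choose Suc (a - 1)"
      unfolding window using \<open>t \<le> a * t\<close> by (intro sum_reversed_choose) linarith
    also have "Suc (a - 1 + (t - 1 - b)) = a + t - b - 1" using a b by linarith
    also have "Suc (a - 1) = a" using a by simp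
    finally show ?thesis by (simp add: a_def b_def)
  qed
qed

section \<open>Membership in the powers of the path ideal\<close>

definition gens_dvd :: "nat \<Rightarrow> nat \<Rightarrow> nat \<Rightarrow> nat \<Rightarrow> (nat \<Rightarrow> nat) \<Rightarrow> bool" where
  "gens_dvd t L m s \<alpha> \<longleftrightarrow>
     (\<exists>c. (\<Sum>i=L..m. c i) = s \<and> (\<forall>j. (\<Sum>i=L..m. c i * path_gen t i j) \<le> \<alpha> j))"

lemma in_path_power_iff_gens_dvd: "in_path_power n t s \<alpha> \<longleftrightarrow> gens_dvd t 1 (n - t + 1) s \<alpha>"
  by (simp add: in_path_power_def gens_dvd_def)

lemma gens_dvd_0: "gens_dvd t L m 0 \<alpha>"
  unfolding gens_dvd_def by (rule exI[of _ "\<lambda>_. 0"]) simp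

lemma path_gen_eq_indicator: "path_gen t L j = (if j \<in> {L..<L + t} then 1 else 0)"
  by (simp add: path_gen_def)

lemma gens_dvd_extend:
  assumes "L \<le> p" "L \<le> m" "x \<le> s"
    and "gens_dvd t (Suc p) m (s - x) \<alpha>'"
    and le: "\<And>j. \<alpha>' j + x * path_gen t L j \<le> \<alpha> j"
  shows "gens_dvd t L m s \<alpha>"
proof -
  obtain c' where c': "(\<Sum>i=Suc p..m. c' i) = s - x"
    and c'_le: "\<And>j. (\<Sum>i=Suc p..m. c' i * path_gen t i j) \<le> \<alpha>' j"
    using assms(4) by (auto simp: gens_dvd_def)
  define c where "c i = (if i = L then x else if p < i then c' i else 0)" for i
  have split: "(\<Sum>i=L..m. c i * g i) = x * g L + (\<Sum>i=Suc p..m. c' i * g i)"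
    for g :: "nat \<Rightarrow> nat"
  proof -
    have "{L..m} = insert L {Suc L..m}" using assms(2) by auto
    then have "(\<Sum>i=L..m. c i * g i) = x * g L + (\<Sum>i=Suc L..m. c i * g i)"
      by (simp add: c_def)
    also have "(\<Sum>i=Suc L..m. c i * g i) = (\<Sum>i=Suc p..m. c' i * g i)"
      by (rule sum.mono_neutral_cong_right) (use assms(1) in \<open>auto simp: c_def\<close>)
    finally show ?thesis .
  qed
  have "(\<Sum>i=L..m. c i) = s" using split[of "\<lambda>_. 1"] c' assms(3) by simp
  moreover have "(\<Sum>i=L..m. c i * path_gen t i j) \<le> \<alpha> j" for j
    using split[of "\<lambda>i. path_gen t i j"] c'_le[of j] le[of j] by simp
  ultimately show ?thesis unfolding gens_dvd_def by blast
qed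

lemma gens_dvd_imp_le_sum:
  assumes "gens_dvd t L m s \<alpha>" "hits_windows t {L..m} C" "finite C"
  shows "s \<le> sum \<alpha> C"
proof -
  obtain c where c: "(\<Sum>i=L..m. c i) = s" and c_le: "\<And>j. (\<Sum>i=L..m. c i * path_gen t i j) \<le> \<alpha> j"
    using assms(1) by (auto simp: gens_dvd_def)
  have "s = (\<Sum>i=L..m. c i * 1)" using c by simp
  also have "\<dots> \<le> (\<Sum>i=L..m. c i * (\<Sum>j\<in>C. path_gen t i j))"
  proof (rule sum_mono)
    fix i assume "i \<in> {L..m}"
    then obtain j where j: "j \<in> C" "i \<le> j" "j < i + t"
      using assms(2) unfolding hits_windows_def by blast
    then have "1 \<le> (\<Sum>j\<in>C. path_gen t i j)"
      using member_le_sum[of j C "path_gen t i"] assms(3) by (simp add: path_gen_def)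
    then show "c i * 1 \<le> c i * (\<Sum>j\<in>C. path_gen t i j)" by (rule mult_left_mono) simp
  qed
  also have "\<dots> = (\<Sum>j\<in>C. \<Sum>i=L..m. c i * path_gen t i j)"
    by (simp add: sum_distrib_left sum.swap[of _ C])
  also have "\<dots> \<le> sum \<alpha> C" by (rule sum_mono) (rule c_le)
  finally show ?thesis .
qed

lemma sum_path_gen_eq_card: "finite C \<Longrightarrow> (\<Sum>j\<in>C. path_gen t L j) = card (C \<inter> {L..<L + t})"
  by (simp add: path_gen_eq_indicator sum.If_cases Int_def)

lemma hits_windows_mono: "hits_windows t I C \<Longrightarrow> C \<subseteq> D \<Longrightarrow> hits_windows t I D"
  unfolding hits_windows_def by blast

lemma hits_windows_extend_left:
  assumes "hits_windows t {Suc p..m} C" "q \<in> C" "p \<le> q" "q < L + t"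
  shows "hits_windows t {L..m} C"
  unfolding hits_windows_def
proof
  fix i assume i: "i \<in> {L..m}"
  show "\<exists>j\<in>C. i \<le> j \<and> j < i + t"
  proof (cases "i \<le> p")
    case True
    then show ?thesis using assms(2-4) i by (intro bexI[of _ q]) auto
  next
    case False
    then show ?thesis using assms(1) i unfolding hits_windows_def by auto
  qed
qed

lemma hits_windows_extend:
  assumes "L \<le> p" "p < L + t" "L + t \<le> n + 1"
    and C': "C' \<subseteq> {Suc p..n}" "hits_windows t {Suc p..m} C'"
      "card (C' \<inter> {Suc p..<Suc p + t}) \<le> 1"
    and small: "sum \<alpha>' C' + \<alpha> p < s"
    and \<alpha>: "\<And>j. \<alpha> j = \<alpha>' j + \<alpha> p * path_gen t L j"
  shows "\<exists>C\<subseteq>{L..n}. hits_windows t {L..m} C \<and> sum \<alpha> C < s \<and> card (C \<inter> {L..<L + t}) \<le> 1"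
proof -
  let ?W = "{L..<L + t}"
  have fin: "finite C'" using finite_subset[OF C'(1)] by simp
  have "sum \<alpha> C' = (\<Sum>j\<in>C'. \<alpha>' j + \<alpha> p * path_gen t L j)" by (rule sum.cong[OF refl \<alpha>])
  then have sum_\<alpha>: "sum \<alpha> C' = sum \<alpha>' C' + \<alpha> p * card (C' \<inter> ?W)"
    using fin by (simp add: sum.distrib sum_distrib_left[symmetric] sum_path_gen_eq_card)
  have "C' \<inter> ?W \<subseteq> C' \<inter> {Suc p..<Suc p + t}" using C'(1) assms(1,2) by auto
  then have "card (C' \<inter> ?W) \<le> card (C' \<inter> {Suc p..<Suc p + t})" using fin by (intro card_mono) auto
  then have "card (C' \<inter> ?W) \<le> 1" using C'(3) by linarith
  then consider "card (C' \<inter> ?W) = 0" | "card (C' \<inter> ?W) = 1" by linarith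
  then consider "C' \<inter> ?W = {}" | q where "C' \<inter> ?W = {q}"
    using fin by (cases; auto simp: card_1_singleton_iff)
  then show ?thesis
  proof cases
    case 1
    have "p \<notin> C'" using C'(1) by auto
    then have "sum \<alpha> (insert p C') < s" using fin small sum_\<alpha> 1 by simp
    moreover have "insert p C' \<subseteq> {L..n}" using C'(1) assms(1-3) by auto
    moreover have "insert p C' \<inter> ?W = {p}" using 1 assms(1,2) by auto
    moreover have "hits_windows t {Suc p..m} (insert p C')"
      by (rule hits_windows_mono[OF C'(2)]) (rule subset_insertI)
    then have "hits_windows t {L..m} (insert p C')"
      by (rule hits_windows_extend_left[OF _ insertI1 order.refl assms(2)])
    ultimately show ?thesis by (intro exI[of _ "insert p C'"]) simp
  next
    case (2 q)
    then have "q \<in> C'" "p \<le> q" "q < L + t" using C'(1) by auto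
    then have "hits_windows t {L..m} C'" by (intro hits_windows_extend_left[OF C'(2)])
    moreover have "sum \<alpha> C' < s" using small sum_\<alpha> 2 by simp
    moreover have "C' \<subseteq> {L..n}" using C'(1) assms(1) by auto
    ultimately show ?thesis using 2 by (intro exI[of _ C']) simp
  qed
qed

text \<open>
  Greedy packing: use \<open>u\<^sub>L\<close> as often as the least exponent \<open>\<alpha> p\<close> on its support allows and
  continue from \<open>p + 1\<close> with the remaining exponents. If this fails, a light cover is
  assembled from right to left; meeting the first window at most once guarantees that the
  exponents spent on \<open>u\<^sub>L\<close> are counted only once.
\<close>

lemma not_gens_dvd_imp_hits_windows:
  assumes "1 \<le> t" "m + t \<le> n + 1" "\<not> gens_dvd t L m s \<alpha>"
  shows "\<exists>C\<subseteq>{L..n}. hits_windows t {L..m} C \<and> sum \<alpha> C < s \<and> card (C \<inter> {L..<L + t}) \<le> 1"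
  using assms(3)
proof (induction "Suc m - L" arbitrary: L s \<alpha> rule: less_induct)
  case less
  show ?case
  proof (cases "L \<le> m")
    case False
    have "s \<noteq> 0"
    proof
      assume "s = 0"
      then show False using less.prems gens_dvd_0[of t L m \<alpha>] by simp
    qed
    then show ?thesis using False by (intro exI[of _ "{}"]) (simp add: hits_windows_def)
  next
    case True
    let ?W = "{L..<L + t}"
    have "finite (\<alpha> ` ?W)" "\<alpha> ` ?W \<noteq> {}" using assms(1) by auto
    then have "Min (\<alpha> ` ?W) \<in> \<alpha> ` ?W" by (rule Min_in)
    then obtain p where p: "p \<in> ?W" "\<alpha> p = Min (\<alpha> ` ?W)" by (metis imageE)
    have p_min: "\<alpha> p \<le> \<alpha> j" if "j \<in> ?W" for j
      unfolding p(2) using that by (intro Min_le) auto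
    have window: "L \<le> p" "p < L + t" "L + t \<le> n + 1" using p(1) True assms(2) by auto
    show ?thesis
    proof (cases "s \<le> \<alpha> p")
      case True
      have "gens_dvd t L m s \<alpha>"
      proof (rule gens_dvd_extend[OF window(1) \<open>L \<le> m\<close> order.refl])
        show "gens_dvd t (Suc p) m (s - s) (\<lambda>_. 0)" by (simp add: gens_dvd_0)
        show "0 + s * path_gen t L j \<le> \<alpha> j" for j
          using True p_min[of j] by (cases "j \<in> ?W") (auto simp: path_gen_eq_indicator)
      qed
      then show ?thesis using less.prems by contradiction
    next
      case False
      define \<alpha>' where "\<alpha>' j = \<alpha> j - \<alpha> p * path_gen t L j" for j
      have \<alpha>: "\<alpha> j = \<alpha>' j + \<alpha> p * path_gen t L j" for j
        using p_min[of j] by (simp add: \<alpha>'_def path_gen_eq_indicator)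
      have "\<alpha>' j + \<alpha> p * path_gen t L j \<le> \<alpha> j" for j using \<alpha>[of j] by linarith
      then have "\<not> gens_dvd t (Suc p) m (s - \<alpha> p) \<alpha>'"
        using less.prems gens_dvd_extend[OF window(1) \<open>L \<le> m\<close>, of "\<alpha> p" s] False by auto
      moreover have "Suc m - Suc p < Suc m - L" using window True by simp
      ultimately obtain C' where C': "C' \<subseteq> {Suc p..n}" "hits_windows t {Suc p..m} C'"
        "card (C' \<inter> {Suc p..<Suc p + t}) \<le> 1" and "sum \<alpha>' C' < s - \<alpha> p"
        using less.hyps by blast
      then have "sum \<alpha>' C' + \<alpha> p < s" using False by linarith
      from hits_windows_extend[OF window C' this \<alpha>] show ?thesis .
    qed
  qed
qed

lemma not_in_path_power_iff:
  assumes "1 \<le> t" "t \<le> n"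
  shows "\<not> in_path_power n t s \<alpha> \<longleftrightarrow> (\<exists>C. path_cover t n C \<and> sum \<alpha> C < s)"
proof
  assume "\<not> in_path_power n t s \<alpha>"
  then obtain C where "C \<subseteq> {1..n}" "hits_windows t {1..n - t + 1} C" "sum \<alpha> C < s"
    using not_gens_dvd_imp_hits_windows[OF assms(1), of "n - t + 1" n 1 s \<alpha>] assms
    by (auto simp: in_path_power_iff_gens_dvd)
  moreover have "n - t + 1 = n + 1 - t" using assms(2) by simp
  ultimately show "\<exists>C. path_cover t n C \<and> sum \<alpha> C < s" by (auto simp: path_cover_def)
next
  assume "\<exists>C. path_cover t n C \<and> sum \<alpha> C < s"
  then obtain C where C: "path_cover t n C" "sum \<alpha> C < s" by blast
  have "n + 1 - t = n - t + 1" using assms(2) by simp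
  then have hits: "hits_windows t {1..n - t + 1} C" using C(1) by (simp add: path_cover_def)
  have "\<not> gens_dvd t 1 (n - t + 1) s \<alpha>"
  proof
    assume "gens_dvd t 1 (n - t + 1) s \<alpha>"
    from gens_dvd_imp_le_sum[OF this hits finite_path_cover[OF C(1)]] C(2) show False by simp
  qed
  then show "\<not> in_path_power n t s \<alpha>" by (simp add: in_path_power_iff_gens_dvd)
qed

section \<open>The Hilbert series by inclusion-exclusion\<close>

definition sums_below :: "nat \<Rightarrow> 'a set set \<Rightarrow> ('a \<Rightarrow> nat) \<Rightarrow> bool" where
  "sums_below s F \<alpha> \<longleftrightarrow> (\<forall>C\<in>F. sum \<alpha> C < s)"

lemma path_hilb_incl_excl:
  assumes "1 \<le> t" "t \<le> n"
  shows "int (path_hilb n t s k)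
           = (\<Sum>F | F \<subseteq> {C. path_cover t n C} \<and> F \<noteq> {}.
                (-1) ^ (card F + 1) * int (deg_count (sums_below s F) {1..n} k))"
proof -
  let ?N = "{1..n}"
  define S where "S C = {\<alpha> \<in> exps_on ?N. sum \<alpha> C < s \<and> sum \<alpha> ?N = k}" for C
  have outside: "{\<alpha> \<in> monomial_exps n. mdeg n \<alpha> = k \<and> \<not> in_path_power n t s \<alpha>}
      = \<Union> (S ` {C. path_cover t n C})"
    using not_in_path_power_iff[OF assms]
    by (auto simp: monomial_exps_def mdeg_def exps_on_def S_def)
  have finite_S: "finite (S C)" for C unfolding S_def by (rule finite_exps_on_deg) simp
  interpret Incl_Excl finite "int \<circ> card"
    by standard (auto simp add: card_Un_disjnt)
  have "int (card (\<Union> (S ` {C. path_cover t n C})))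
      = (\<Sum>F | F \<subseteq> {C. path_cover t n C} \<and> F \<noteq> {}. (-1) ^ (card F + 1) * int (card (\<Inter> (S ` F))))"
    using restricted_indexed[OF finite_path_covers[of t n], of S] finite_S by simp
  also have "\<dots> = (\<Sum>F | F \<subseteq> {C. path_cover t n C} \<and> F \<noteq> {}.
                     (-1) ^ (card F + 1) * int (deg_count (sums_below s F) ?N k))"
  proof (rule sum.cong[OF refl])
    fix F assume "F \<in> {F. F \<subseteq> {C. path_cover t n C} \<and> F \<noteq> {}}"
    then have "\<Inter> (S ` F) = {\<alpha> \<in> exps_on ?N. sums_below s F \<alpha> \<and> sum \<alpha> ?N = k}"
      by (auto simp: S_def sums_below_def)
    then show "(-1) ^ (card F + 1) * int (card (\<Inter> (S ` F)))
        = (-1) ^ (card F + 1) * int (deg_count (sums_below s F) ?N k)"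
      by (simp add: deg_count_def)
  qed
  finally show ?thesis unfolding path_hilb_def outside .
qed

lemma path_hilbert_series_incl_excl:
  assumes "1 \<le> t" "t \<le> n"
  shows "Abs_fps (\<lambda>k. int (path_hilb n t s k))
           = (\<Sum>F | F \<subseteq> {C. path_cover t n C} \<and> F \<noteq> {}.
                fps_const ((-1) ^ (card F + 1)) * deg_series (sums_below s F) {1..n})"
  by (rule fps_ext) (simp add: fps_sum_nth deg_series_def path_hilb_incl_excl[OF assms])

lemma deg_series_sums_below_restrict:
  assumes "finite X" "\<Union>F \<subseteq> X"
  shows "deg_series (sums_below s F) X * (1 - fps_X) ^ (card X - card (\<Union>F))
           = deg_series (sums_below s F) (\<Union>F)"
proof -
  have fin: "finite (\<Union>F)" using assms finite_subset by auto
  have "deg_series (sums_below s F) (\<Union>F \<union> (X - \<Union>F)) * (1 - fps_X) ^ card (X - \<Union>F)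
      = deg_series (sums_below s F) (\<Union>F)"
  proof (rule deg_series_remove_vars)
    fix \<alpha> \<beta> :: "'a \<Rightarrow> nat" assume "\<forall>j\<in>\<Union>F. \<alpha> j = \<beta> j"
    then have "sum \<alpha> C = sum \<beta> C" if "C \<in> F" for C
      using that by (intro sum.cong) auto
    then show "sums_below s F \<alpha> = sums_below s F \<beta>" by (simp add: sums_below_def)
  qed (use assms fin in auto)
  moreover have "\<Union>F \<union> (X - \<Union>F) = X" using assms(2) by auto
  moreover have "card (X - \<Union>F) = card X - card (\<Union>F)" using assms fin by (simp add: card_Diff_subset)
  ultimately show ?thesis by simp
qed

definition sums_below_poly :: "nat \<Rightarrow> 'a set set \<Rightarrow> int poly" where
  "sums_below_poly s F = (\<Sum>k\<le>card (\<Union>F) * s. monom (int (deg_count (sums_below s F) (\<Union>F) k)) k)"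

lemma fps_of_poly_sum_monom:
  assumes "\<And>k. K < k \<Longrightarrow> f k = 0"
  shows "fps_of_poly (\<Sum>k\<le>K. monom (f k) k) = Abs_fps (f :: nat \<Rightarrow> int)"
proof (rule fps_ext)
  fix n
  have "fps_of_poly (\<Sum>k\<le>K. monom (f k) k) $ n = (\<Sum>k\<le>K. if k = n then f k else 0)"
    by (simp add: fps_of_poly_nth coeff_sum)
  also have "\<dots> = f n" using assms[of n] by (cases "n \<le> K") auto
  finally show "fps_of_poly (\<Sum>k\<le>K. monom (f k) k) $ n = Abs_fps f $ n" by simp
qed

lemma deg_count_sums_below_eq_0:
  assumes "finite (\<Union>F)" "card (\<Union>F) * s < k"
  shows "deg_count (sums_below s F) (\<Union>F) k = 0"
proof -
  have "sum \<alpha> (\<Union>F) < k" if "sums_below s F \<alpha>" for \<alpha>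
  proof -
    have "\<alpha> j \<le> s" if "j \<in> \<Union>F" for j
    proof -
      obtain C where C: "C \<in> F" "j \<in> C" using \<open>j \<in> \<Union>F\<close> by blast
      have "finite C" using C assms(1) by (meson Union_upper finite_subset)
      then have "\<alpha> j \<le> sum \<alpha> C" using C(2) by (intro member_le_sum) auto
      also have "\<dots> < s" using C(1) \<open>sums_below s F \<alpha>\<close> by (simp add: sums_below_def)
      finally show ?thesis by simp
    qed
    then have "sum \<alpha> (\<Union>F) \<le> card (\<Union>F) * s" using sum_bounded_above[of "\<Union>F" \<alpha> s] by simp
    then show ?thesis using assms(2) by simp
  qed
  then have none: "{\<alpha> \<in> exps_on (\<Union>F). sums_below s F \<alpha> \<and> sum \<alpha> (\<Union>F) = k} = {}"
    by blast
  show ?thesis unfolding deg_count_def none by simp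
qed

lemma fps_of_sums_below_poly:
  "finite (\<Union>F) \<Longrightarrow> fps_of_poly (sums_below_poly s F) = deg_series (sums_below s F) (\<Union>F)"
  unfolding sums_below_poly_def deg_series_def
  by (rule fps_of_poly_sum_monom) (simp add: deg_count_sums_below_eq_0)

lemma poly_sums_below_poly_singleton:
  assumes "finite C" "C \<noteq> {}" "1 \<le> s"
  shows "poly (sums_below_poly s {C}) 1 = int ((s + card C - 1) choose (s - 1))"
proof -
  have count: "deg_count (sums_below s {C}) C k = (if k < s then (k + card C - 1) choose k else 0)"
    for k
  proof (cases "k < s")
    case True
    then have "deg_count (sums_below s {C}) C k = deg_count (\<lambda>_. True) C k"
      unfolding deg_count_def sums_below_def by (intro arg_cong[where f = card]) auto
    then show ?thesis using deg_count_all[OF assms(1), of k] assms(2) True by simp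
  next
    case False
    then have none: "{\<alpha> \<in> exps_on C. sums_below s {C} \<alpha> \<and> sum \<alpha> C = k} = {}"
      by (auto simp: sums_below_def)
    show ?thesis using False unfolding deg_count_def none by simp
  qed
  have "1 \<le> card C" using assms(1,2) by (simp add: Suc_le_eq card_gt_0_iff)
  then have "1 * s \<le> card C * s" by (rule mult_le_mono1)
  then have "s - 1 \<le> card C * s" by linarith
  then have "poly (sums_below_poly s {C}) 1 = (\<Sum>k\<le>s - 1. int ((card C - 1 + k) choose k))"
    unfolding sums_below_poly_def poly_sum poly_monom
    by (intro sum.mono_neutral_cong_right) (use count \<open>1 \<le> card C\<close> assms(3) in \<open>auto simp: add.commute\<close>)
  also have "\<dots> = int (Suc (card C - 1 + (s - 1)) choose (s - 1))"
    by (simp flip: sum_choose_lower)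
  also have "Suc (card C - 1 + (s - 1)) = s + card C - 1"
    using \<open>1 \<le> card C\<close> assms(3) by linarith
  finally show ?thesis .
qed

text \<open>The numerator of the Hilbert series of \<open>S/I\<^sub>t(L\<^sub>n)\<^sup>s\<close> over \<open>(1 - z)\<^bsup>n - n div t\<^esup>\<close>.\<close>

definition path_numerator :: "nat \<Rightarrow> nat \<Rightarrow> nat \<Rightarrow> int poly" where
  "path_numerator n t s = (\<Sum>F | F \<subseteq> {C. path_cover t n C} \<and> F \<noteq> {}.
      smult ((-1) ^ (card F + 1)) (sums_below_poly s F * [:1, -1:] ^ (card (\<Union>F) - n div t)))"

lemma fps_of_poly_one_minus_X: "fps_of_poly [:1, -1:] = (1 - fps_X :: int fps)"
  by (simp add: fps_of_poly_pCons fps_const_neg)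

lemma path_cover_family_Union:
  assumes "1 \<le> t" "F \<subseteq> {C. path_cover t n C}" "F \<noteq> {}"
  shows "\<Union>F \<subseteq> {1..n}" and "n div t \<le> card (\<Union>F)"
  using path_cover_Union[OF assms(2,3)] path_cover_subset card_path_cover_ge[OF assms(1)] by auto

lemma fps_of_path_numerator:
  assumes "1 \<le> t" "t \<le> n"
  shows "fps_of_poly (path_numerator n t s)
           = Abs_fps (\<lambda>k. int (path_hilb n t s k)) * (1 - fps_X) ^ (n - n div t)"
proof -
  have summand: "fps_of_poly (sums_below_poly s F * [:1, -1:] ^ (card (\<Union>F) - n div t))
      = deg_series (sums_below s F) {1..n} * (1 - fps_X) ^ (n - n div t)"
    if "F \<subseteq> {C. path_cover t n C}" "F \<noteq> {}" for F
  proof -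
    let ?U = "\<Union>F" and ?H = "deg_series (sums_below s F)"
    have U: "?U \<subseteq> {1..n}" "n div t \<le> card ?U" using path_cover_family_Union[OF assms(1) that] .
    have fin: "finite ?U" using U(1) finite_subset by auto
    have "card ?U \<le> n" using card_mono[OF _ U(1)] by simp
    then have "n - n div t = (n - card ?U) + (card ?U - n div t)" using U(2) by linarith
    then have "?H {1..n} * (1 - fps_X) ^ (n - n div t)
        = ?H {1..n} * (1 - fps_X) ^ (card {1..n} - card ?U) * (1 - fps_X) ^ (card ?U - n div t)"
      by (simp add: power_add mult.assoc)
    also have "\<dots> = ?H ?U * (1 - fps_X) ^ (card ?U - n div t)"
      using deg_series_sums_below_restrict[of "{1..n}" F s] U(1) by simp
    also have "\<dots> = fps_of_poly (sums_below_poly s F * [:1, -1:] ^ (card ?U - n div t))"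
      by (simp add: fps_of_sums_below_poly[OF fin] fps_of_poly_mult fps_of_poly_power
          fps_of_poly_one_minus_X)
    finally show ?thesis by simp
  qed
  have "fps_of_poly (path_numerator n t s)
      = (\<Sum>F | F \<subseteq> {C. path_cover t n C} \<and> F \<noteq> {}.
           fps_const ((-1) ^ (card F + 1)) * (deg_series (sums_below s F) {1..n} * (1 - fps_X) ^ (n - n div t)))"
    unfolding path_numerator_def fps_of_poly_sum fps_of_poly_smult
    by (rule sum.cong) (simp_all add: summand)
  also have "\<dots> = (\<Sum>F | F \<subseteq> {C. path_cover t n C} \<and> F \<noteq> {}.
           fps_const ((-1) ^ (card F + 1)) * deg_series (sums_below s F) {1..n}) * (1 - fps_X) ^ (n - n div t)"
    by (simp add: sum_distrib_right mult.assoc)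
  also have "\<dots> = Abs_fps (\<lambda>k. int (path_hilb n t s k)) * (1 - fps_X) ^ (n - n div t)"
    by (simp only: path_hilbert_series_incl_excl[OF assms])
  finally show ?thesis .
qed

lemma min_cover_family_singleton:
  assumes "1 \<le> t" "F \<subseteq> {C. path_cover t n C}" "F \<noteq> {}" "card (\<Union>F) \<le> n div t"
  shows "\<exists>C\<in>min_path_covers t n. F = {C}"
proof -
  have U: "\<Union>F \<subseteq> {1..n}" "n div t \<le> card (\<Union>F)" using path_cover_family_Union[OF assms(1-3)] .
  have fin: "finite (\<Union>F)" using U(1) finite_subset by auto
  have "C = \<Union>F" if "C \<in> F" for C
  proof (rule card_subset_eq[OF fin])
    show "C \<subseteq> \<Union>F" using that by blast
    have "n div t \<le> card C" using card_path_cover_ge[OF assms(1)] assms(2) that by blast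
    then show "card C = card (\<Union>F)" using card_mono[OF fin \<open>C \<subseteq> \<Union>F\<close>] assms(4) by linarith
  qed
  then have "F = {\<Union>F}" using assms(3) by blast
  moreover have "\<Union>F \<in> min_path_covers t n"
    using path_cover_Union[OF assms(2,3)] U(2) assms(4) by (simp add: min_path_covers_def)
  ultimately show ?thesis by blast
qed

section \<open>The multiplicity\<close>

lemma poly_path_numerator_1:
  assumes "1 \<le> t" "t \<le> n" "1 \<le> s"
  shows "poly (path_numerator n t s) 1
           = int (card (min_path_covers t n) * ((s + n div t - 1) choose (s - 1)))"
proof -
  let ?Fam = "{F. F \<subseteq> {C. path_cover t n C} \<and> F \<noteq> {}}" and ?a = "n div t"
  define g where "g F = (-1) ^ (card F + 1) * (poly (sums_below_poly s F) 1 * 0 ^ (card (\<Union>F) - ?a))"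
    for F :: "nat set set"
  have a: "1 \<le> ?a" using assms(1,2) div_le_mono[of t n t] by simp
  have "poly (path_numerator n t s) 1 = (\<Sum>F\<in>?Fam. g F)"
    by (simp add: path_numerator_def poly_sum g_def)
  \<comment> \<open>the factor \<open>0 ^ (card (\<Union>F) - ?a)\<close> kills all families but single minimum covers\<close>
  also have "\<dots> = (\<Sum>F\<in>(\<lambda>C. {C}) ` min_path_covers t n. g F)"
  proof (rule sum.mono_neutral_right)
    have "?Fam \<subseteq> Pow {C. path_cover t n C}" by blast
    then show "finite ?Fam" using finite_path_covers[of t n] by (simp add: finite_subset)
    show "(\<lambda>C. {C}) ` min_path_covers t n \<subseteq> ?Fam" by (auto simp: min_path_covers_def)
    show "\<forall>F\<in>?Fam - (\<lambda>C. {C}) ` min_path_covers t n. g F = 0"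
    proof
      fix F assume "F \<in> ?Fam - (\<lambda>C. {C}) ` min_path_covers t n"
      then have F: "F \<subseteq> {C. path_cover t n C}" "F \<noteq> {}"
        and "\<not> (\<exists>C\<in>min_path_covers t n. F = {C})" by auto
      then have "\<not> card (\<Union>F) \<le> ?a" using min_cover_family_singleton[OF assms(1) F] by blast
      then show "g F = 0" by (simp add: g_def)
    qed
  qed
  also have "\<dots> = (\<Sum>C\<in>min_path_covers t n. g {C})"
    by (simp add: sum.reindex inj_on_def)
  also have "\<dots> = (\<Sum>C\<in>min_path_covers t n. int ((s + ?a - 1) choose (s - 1)))"
  proof (rule sum.cong[OF refl])
    fix C assume "C \<in> min_path_covers t n"
    then have "finite C" "card C = ?a" by (auto simp: min_path_covers_def finite_path_cover)
    moreover have "C \<noteq> {}" using calculation a by auto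
    ultimately show "g {C} = int ((s + ?a - 1) choose (s - 1))"
      using poly_sums_below_poly_singleton[of C s] assms(3) by (simp add: g_def)
  qed
  finally show ?thesis by simp
qed

lemma fps_numerator_shift:
  fixes A B :: "int poly"
  assumes "fps_of_poly A = G * (1 - fps_X) ^ d" "fps_of_poly B = G * (1 - fps_X) ^ (d + e)"
  shows "B = A * [:1, -1:] ^ e"
proof -
  have "fps_of_poly B = fps_of_poly A * (1 - fps_X) ^ e"
    using assms by (simp add: power_add mult.assoc)
  also have "\<dots> = fps_of_poly (A * [:1, -1:] ^ e)"
    by (simp add: fps_of_poly_mult fps_of_poly_power fps_of_poly_one_minus_X)
  finally show ?thesis by (simp only: fps_of_poly_eq_iff)
qed

lemma hilbert_mult_eqI:
  assumes Q: "fps_of_poly Q = Abs_fps (\<lambda>k. int (h k)) * (1 - fps_X) ^ d" and "poly Q 1 \<noteq> 0"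
  shows "hilbert_mult h = poly Q 1"
  unfolding hilbert_mult_def
proof (rule the_equality)
  show "\<exists>d Q'. fps_of_poly Q' = Abs_fps (\<lambda>k. int (h k)) * (1 - fps_X) ^ d \<and>
      poly Q' 1 \<noteq> 0 \<and> poly Q 1 = poly Q' 1"
    using assms by blast
next
  fix e assume "\<exists>d' Q'. fps_of_poly Q' = Abs_fps (\<lambda>k. int (h k)) * (1 - fps_X) ^ d' \<and>
      poly Q' 1 \<noteq> 0 \<and> e = poly Q' 1"
  then obtain d' Q' where Q': "fps_of_poly Q' = Abs_fps (\<lambda>k. int (h k)) * (1 - fps_X) ^ d'"
    and nz: "poly Q' 1 \<noteq> 0" and e: "e = poly Q' 1" by blast
  \<comment> \<open>a factor \<open>1 - z\<close> more in the denominator would make the numerator vanish at 1\<close>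
  have "d' = d"
  proof (rule ccontr)
    assume "d' \<noteq> d"
    then consider "d < d'" | "d' < d" by linarith
    then show False
    proof cases
      case 1
      then have "Q' = Q * [:1, -1:] ^ (d' - d)"
        using fps_numerator_shift[OF Q, of Q' "d' - d"] Q' by simp
      then show False using nz 1 by simp
    next
      case 2
      then have "Q = Q' * [:1, -1:] ^ (d - d')"
        using fps_numerator_shift[OF Q', of Q "d - d'"] Q by simp
      then show False using assms(2) 2 by simp
    qed
  qed
  then have "Q' = Q" using fps_numerator_shift[OF Q, of Q' 0] Q' by simp
  then show "e = poly Q 1" using e by simp
qed

lemma hilbert_mult_path_power:
  assumes "1 \<le> t" "t \<le> n" "1 \<le> s"
  shows "hilbert_mult (path_hilb n t s)
           = int (card (min_path_covers t n) * ((s + n div t - 1) choose (s - 1)))"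
proof (rule hilbert_mult_eqI[OF fps_of_path_numerator[OF assms(1,2)], of s, THEN trans])
  have "n mod t < t" using assms(1) by simp
  then have "card (min_path_covers t n) \<noteq> 0"
    using card_min_path_covers[OF assms(1), of n] by simp
  then show "poly (path_numerator n t s) 1 \<noteq> 0" by (simp add: poly_path_numerator_1[OF assms])
qed (simp add: poly_path_numerator_1[OF assms])

lemma poly_choose_exists:
  "\<exists>p :: 'a :: field_char_0 poly. degree p = a \<and>
     (\<forall>s::nat. 1 \<le> s \<longrightarrow> poly p (of_nat s) = of_nat ((s + a - 1) choose (s - 1)))"
proof (intro exI conjI allI impI)
  let ?q = "\<Prod>k<a. [:of_nat k, 1:] :: 'a poly"
  show "degree (smult (1 / fact a) ?q) = a"
    by (simp add: degree_prod_eq_sum_degree)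
  fix s :: nat assume s: "1 \<le> s"
  have "(s + a - 1) choose (s - 1) = (s + a - 1) choose a"
    using binomial_symmetric[of "s - 1" "s + a - 1"] s by simp
  then have "(of_nat ((s + a - 1) choose (s - 1)) :: 'a) = of_nat (s + a - 1) gchoose a"
    by (simp add: binomial_gbinomial)
  also have "\<dots> = pochhammer (of_nat s) a / fact a"
    using s by (simp add: gbinomial_pochhammer' of_nat_diff)
  also have "pochhammer (of_nat s) a = poly ?q (of_nat s)"
    by (simp add: poly_prod pochhammer_prod atLeast0LessThan add.commute)
  finally show "poly (smult (1 / fact a) ?q) (of_nat s) = of_nat ((s + a - 1) choose (s - 1))"
    by simp
qed

theorem theorem3p9:
  fixes n t a b :: nat
  assumes "1 \<le> t" and "t \<le> n" and "n = a * t + b" and "1 \<le> a" and "b < t"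
  shows "(\<forall>s::nat. 1 \<le> s \<longrightarrow>
            hilbert_mult (path_hilb n t s)
              = int (((s + a - 1) choose (s - 1)) * ((a + t - b - 1) choose a)))
       \<and> (\<exists>p :: rat poly. degree p = a \<and>
            (\<forall>s::nat. 1 \<le> s \<longrightarrow> of_int (hilbert_mult (path_hilb n t s)) = poly p (of_nat s)))"
proof -
  let ?N = "(a + t - b - 1) choose a"
  have "n div t = a" "n mod t = b" using assms(3,5) by simp_all
  then have mult: "hilbert_mult (path_hilb n t s) = int (((s + a - 1) choose (s - 1)) * ?N)"
    if "1 \<le> s" for s
    using hilbert_mult_path_power[OF assms(1,2) that] card_min_path_covers[OF assms(1), of n]
    by (simp add: mult.commute)
  obtain p :: "rat poly" where p: "degree p = a"
    "\<forall>s::nat. 1 \<le> s \<longrightarrow> poly p (of_nat s) = of_nat ((s + a - 1) choose (s - 1))"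
    using poly_choose_exists by blast
  have "?N \<noteq> 0" using assms(5) by simp
  then have "degree (smult (of_nat ?N) p) = a" using p(1) by simp
  moreover have "of_int (hilbert_mult (path_hilb n t s)) = poly (smult (of_nat ?N) p) (of_nat s)"
    if "1 \<le> s" for s
    using mult[OF that] p(2) that by simp
  ultimately show ?thesis using mult by blast
qed

end
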